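(* Let $n$ and $r$ be positive integers with $\frac{14}{5}r-1\le n\le 3r-2$. Then $\rho_2(K(n,r))=3$.
   Context: For integers $n\ge 2r$, the Kneser graph $K(n,r)$ has as vertices the $r$-element subsets of $[n]=\{1,\dots,n\}$, two vertices being adjacent iff they are disjoint. A $2$-packing of a graph $G$ is a set of vertices pairwise at distance at least $3$ in $G$; $\rho_2(G)$ is the maximum cardinality of a $2$-packing. *)

theory Defs
  imports Complex_Main
begin

definition kneser_verts :: "nat \<Rightarrow> nat \<Rightarrow> nat set set" where
  "kneser_verts n r = {A. A \<subseteq> {1..n} \<and> card A = r}"

definition kneser_adj :: "nat \<Rightarrow> nat \<Rightarrow> nat set \<Rightarrow> nat set \<Rightarrow> bool" where
  "kneser_adj n r A B \<longleftrightarrow> A \<in> kneser_verts n r \<and> B \<in> kneser_verts n r \<and> A \<inter> B = {}"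

fun walk_len :: "'a set \<Rightarrow> ('a \<Rightarrow> 'a \<Rightarrow> bool) \<Rightarrow> 'a \<Rightarrow> 'a \<Rightarrow> nat \<Rightarrow> bool" where
  "walk_len V E x y 0 \<longleftrightarrow> x \<in> V \<and> x = y"
| "walk_len V E x y (Suc k) \<longleftrightarrow> x \<in> V \<and> (\<exists>z\<in>V. E x z \<and> walk_len V E z y k)"

definition dist_ge :: "'a set \<Rightarrow> ('a \<Rightarrow> 'a \<Rightarrow> bool) \<Rightarrow> nat \<Rightarrow> 'a \<Rightarrow> 'a \<Rightarrow> bool" where
  "dist_ge V E d x y \<longleftrightarrow> (\<forall>k<d. \<not> walk_len V E x y k)"

definition two_packing :: "'a set \<Rightarrow> ('a \<Rightarrow> 'a \<Rightarrow> bool) \<Rightarrow> 'a set \<Rightarrow> bool" where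
  "two_packing V E P \<longleftrightarrow> P \<subseteq> V \<and> (\<forall>x\<in>P. \<forall>y\<in>P. x \<noteq> y \<longrightarrow> dist_ge V E 3 x y)"

definition rho2 :: "'a set \<Rightarrow> ('a \<Rightarrow> 'a \<Rightarrow> bool) \<Rightarrow> nat" where
  "rho2 V E = Max (card ` {P. two_packing V E P})"

end

theory Submission
  imports Defs
begin

text \<open>
  Two distinct r-sets A, B of {1..n} are at distance at least 3 in K(n,r) iff they meet and have
  no common neighbour, i.e. fewer than r points lie outside A \<union> B; as
  |A \<union> B| = 2r - |A \<inter> B| this means |A \<inter> B| < 3r - n. For four such sets the Bonferroni
  inequality gives 4r \<le> n + 6(3r - n - 1), i.e. 5n + 6 \<le> 14r, which the lower bound on n
  excludes. Conversely, for 2r \<le> n \<le> 3r - 2, three r-sets sharing a core of 3r - n - 1 points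
  and otherwise pairwise disjoint form a 2-packing.
\<close>

lemma dist_ge_3_iff:
  assumes "x \<in> V" "y \<in> V"
  shows "dist_ge V E 3 x y \<longleftrightarrow> x \<noteq> y \<and> \<not> E x y \<and> \<not> (\<exists>z\<in>V. E x z \<and> E z y)"
  using assms by (auto simp: dist_ge_def less_Suc_eq numeral_eq_Suc)

lemma rho2_eqI:
  assumes "finite V" "two_packing V E P" "card P = k"
    and "\<And>Q. two_packing V E Q \<Longrightarrow> card Q \<le> k"
  shows "rho2 V E = k"
  unfolding rho2_def
proof (rule Max_eqI)
  have "{Q. two_packing V E Q} \<subseteq> Pow V"
    by (auto simp: two_packing_def)
  with \<open>finite V\<close> show "finite (card ` {Q. two_packing V E Q})"
    by (simp add: finite_subset)
  show "y \<le> k" if "y \<in> card ` {Q. two_packing V E Q}" for y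
    using that assms(4) by blast
  show "k \<in> card ` {Q. two_packing V E Q}"
    using assms(2,3) by blast
qed

lemma card_Un4_bonferroni:
  assumes "finite A" "finite B" "finite C" "finite D"
  shows "card A + card B + card C + card D \<le> card (A \<union> B \<union> C \<union> D)
     + card (A \<inter> B) + card (A \<inter> C) + card (B \<inter> C)
     + card (A \<inter> D) + card (B \<inter> D) + card (C \<inter> D)"
proof -
  have "card (A \<union> B) + card (A \<inter> B) = card A + card B"
    using card_Un_Int[of A B] assms by simp
  moreover have "card (A \<union> B \<union> C) + card ((A \<union> B) \<inter> C) = card (A \<union> B) + card C"
    using card_Un_Int[of "A \<union> B" C] assms by simp
  moreover have "card (A \<union> B \<union> C \<union> D) + card ((A \<union> B \<union> C) \<inter> D) = card (A \<union> B \<union> C) + card D"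
    using card_Un_Int[of "A \<union> B \<union> C" D] assms by simp
  moreover have "card ((A \<union> B) \<inter> C) \<le> card (A \<inter> C) + card (B \<inter> C)"
    using card_Un_le[of "A \<inter> C" "B \<inter> C"] by (simp add: Int_Un_distrib2)
  moreover have "card ((A \<union> B \<union> C) \<inter> D) \<le> card (A \<inter> D) + card (B \<inter> D) + card (C \<inter> D)"
    using card_Un_le[of "A \<inter> D \<union> B \<inter> D" "C \<inter> D"] card_Un_le[of "A \<inter> D" "B \<inter> D"]
    by (simp add: Int_Un_distrib2)
  ultimately show ?thesis by linarith
qed

lemma four_le_card_distinctE:
  assumes "4 \<le> card P"
  obtains a b c d where "distinct [a, b, c, d]" "{a, b, c, d} \<subseteq> P"
proof -
  have "\<exists>a b c d. distinct [a, b, c, d] \<and> {a, b, c, d} \<subseteq> P"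
    using assms by (auto simp: card_le_Suc_iff numeral_eq_Suc)
  then show ?thesis
    using that by blast
qed

lemma mem_kneser_verts: "A \<in> kneser_verts n r \<longleftrightarrow> A \<subseteq> {1..n} \<and> card A = r"
  by (simp add: kneser_verts_def)

lemma kneser_verts_finite: "finite (kneser_verts n r)"
  unfolding kneser_verts_def by (rule finite_subset[of _ "Pow {1..n}"]) auto

lemma kneser_vert_finite: "A \<in> kneser_verts n r \<Longrightarrow> finite A"
  unfolding mem_kneser_verts by (meson finite_atLeastAtMost finite_subset)

lemma kneser_common_neighbour_iff:
  assumes "A \<in> kneser_verts n r" "B \<in> kneser_verts n r"
  shows "(\<exists>C\<in>kneser_verts n r. kneser_adj n r A C \<and> kneser_adj n r C B)
    \<longleftrightarrow> card (A \<union> B) + r \<le> n"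
proof -
  have sub: "A \<union> B \<subseteq> {1..n}"
    using assms by (simp add: mem_kneser_verts)
  then have card_compl: "card ({1..n} - (A \<union> B)) + card (A \<union> B) = n"
    using card_Diff_subset[of "A \<union> B" "{1..n}"] card_mono[OF _ sub] finite_subset[OF sub] by simp
  show ?thesis
  proof
    assume "\<exists>C\<in>kneser_verts n r. kneser_adj n r A C \<and> kneser_adj n r C B"
    then obtain C where C: "C \<in> kneser_verts n r" "A \<inter> C = {}" "C \<inter> B = {}"
      unfolding kneser_adj_def by blast
    then have "C \<subseteq> {1..n} - (A \<union> B)"
      by (simp add: mem_kneser_verts) blast
    then have "card C \<le> card ({1..n} - (A \<union> B))"
      by (simp add: card_mono)
    with C(1) card_compl show "card (A \<union> B) + r \<le> n"
      by (simp add: mem_kneser_verts)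
  next
    assume "card (A \<union> B) + r \<le> n"
    then obtain C where C: "C \<subseteq> {1..n} - (A \<union> B)" "card C = r"
      using card_compl obtain_subset_with_card_n[of r "{1..n} - (A \<union> B)"] by auto
    then have "C \<in> kneser_verts n r" "A \<inter> C = {}" "C \<inter> B = {}"
      by (auto simp: mem_kneser_verts)
    then show "\<exists>C\<in>kneser_verts n r. kneser_adj n r A C \<and> kneser_adj n r C B"
      using assms unfolding kneser_adj_def by blast
  qed
qed

lemma kneser_dist_ge_3_iff:
  assumes "A \<in> kneser_verts n r" "B \<in> kneser_verts n r"
  shows "dist_ge (kneser_verts n r) (kneser_adj n r) 3 A B
    \<longleftrightarrow> A \<noteq> B \<and> A \<inter> B \<noteq> {} \<and> card (A \<inter> B) + n < 3 * r"
proof -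
  have "kneser_adj n r A B \<longleftrightarrow> A \<inter> B = {}"
    using assms by (simp add: kneser_adj_def)
  then have "dist_ge (kneser_verts n r) (kneser_adj n r) 3 A B
      \<longleftrightarrow> A \<noteq> B \<and> A \<inter> B \<noteq> {} \<and> n < card (A \<union> B) + r"
    using assms by (simp add: dist_ge_3_iff kneser_common_neighbour_iff not_le)
  moreover have "card (A \<union> B) + card (A \<inter> B) = 2 * r"
    using assms card_Un_Int[OF kneser_vert_finite[OF assms(1)] kneser_vert_finite[OF assms(2)]]
    by (simp add: mem_kneser_verts)
  ultimately show ?thesis
    by linarith
qed

lemma kneser_two_packing_card_le_3:
  assumes "two_packing (kneser_verts n r) (kneser_adj n r) P" "14 * r \<le> 5 * n + 5"
  shows "card P \<le> 3"
proof (rule ccontr)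
  assume "\<not> card P \<le> 3"
  have verts: "X \<in> kneser_verts n r" if "X \<in> P" for X
    using assms(1) that unfolding two_packing_def by blast
  have small_Int: "card (X \<inter> Y) + n < 3 * r" if "X \<in> P" "Y \<in> P" "X \<noteq> Y" for X Y
  proof -
    have "dist_ge (kneser_verts n r) (kneser_adj n r) 3 X Y"
      using assms(1) that unfolding two_packing_def by blast
    then show ?thesis
      using verts that by (simp add: kneser_dist_ge_3_iff)
  qed
  from \<open>\<not> card P \<le> 3\<close> have "4 \<le> card P"
    by simp
  then obtain A B C D where "distinct [A, B, C, D]" "{A, B, C, D} \<subseteq> P"
    by (elim four_le_card_distinctE)
  then have in_P: "A \<in> P" "B \<in> P" "C \<in> P" "D \<in> P"
    and neq: "A \<noteq> B" "A \<noteq> C" "A \<noteq> D" "B \<noteq> C" "B \<noteq> D" "C \<noteq> D"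
    by simp_all
  then have ABCD: "A \<in> kneser_verts n r" "B \<in> kneser_verts n r"
      "C \<in> kneser_verts n r" "D \<in> kneser_verts n r"
    by (simp_all add: verts)
  then have "A \<union> B \<union> C \<union> D \<subseteq> {1..n}"
    by (simp add: mem_kneser_verts)
  from card_mono[OF finite_atLeastAtMost this]
  have "card (A \<union> B \<union> C \<union> D) \<le> n"
    by simp
  moreover have "4 * r \<le> card (A \<union> B \<union> C \<union> D)
     + card (A \<inter> B) + card (A \<inter> C) + card (B \<inter> C)
     + card (A \<inter> D) + card (B \<inter> D) + card (C \<inter> D)"
    using card_Un4_bonferroni[OF ABCD[THEN kneser_vert_finite]] ABCD
    by (simp add: mem_kneser_verts)
  moreover note small_Int[OF in_P(1) in_P(2) neq(1)] small_Int[OF in_P(1) in_P(3) neq(2)]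
    small_Int[OF in_P(2) in_P(3) neq(4)] small_Int[OF in_P(1) in_P(4) neq(3)]
    small_Int[OF in_P(2) in_P(4) neq(5)] small_Int[OF in_P(3) in_P(4) neq(6)]
  ultimately show False
    using assms(2) by linarith
qed

lemma kneser_two_packing_card_3_exists:
  assumes "2 * r \<le> n" "n + 2 \<le> 3 * r"
  shows "\<exists>P. two_packing (kneser_verts n r) (kneser_adj n r) P \<and> card P = 3"
proof -
  define t where "t = 3 * r - n - 1"
  define m where "m = r - t"
  have "1 \<le> t" "t < r" "t + m = r" "r + 2 * m \<le> n"
    using assms unfolding t_def m_def by auto
  define A where "A = {1..r}"
  define B where "B = {1..t} \<union> {r + 1..r + m}"
  define C where "C = {1..t} \<union> {r + m + 1..r + 2 * m}"
  have verts: "A \<in> kneser_verts n r" "B \<in> kneser_verts n r" "C \<in> kneser_verts n r"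
    unfolding mem_kneser_verts A_def B_def C_def
    using \<open>t < r\<close> \<open>t + m = r\<close> \<open>r + 2 * m \<le> n\<close> by (auto simp: card_Un_disjoint)
  have core: "A \<inter> B = {1..t}" "A \<inter> C = {1..t}" "B \<inter> C = {1..t}"
    unfolding A_def B_def C_def using \<open>t < r\<close> by auto
  have "card (A \<inter> B) \<noteq> r" "card (A \<inter> C) \<noteq> r" "card (B \<inter> C) \<noteq> r"
    using core \<open>t < r\<close> by simp_all
  then have "A \<noteq> B" "A \<noteq> C" "B \<noteq> C"
    using verts by (metis Int_absorb mem_kneser_verts)+
  have "dist_ge (kneser_verts n r) (kneser_adj n r) 3 X Y"
    if "X \<in> {A, B, C}" "Y \<in> {A, B, C}" "X \<noteq> Y" for X Y
  proof -
    have "X \<inter> Y = {1..t}"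
      using that by (elim insertE emptyE) (simp_all add: core Int_commute)
    moreover have "card {1..t} + n < 3 * r" "{1..t} \<noteq> {}"
      using \<open>1 \<le> t\<close> assms unfolding t_def by auto
    moreover have "X \<in> kneser_verts n r" "Y \<in> kneser_verts n r"
      using that verts by blast+
    ultimately show ?thesis
      using \<open>X \<noteq> Y\<close> by (simp add: kneser_dist_ge_3_iff)
  qed
  then have "two_packing (kneser_verts n r) (kneser_adj n r) {A, B, C}"
    using verts unfolding two_packing_def by blast
  moreover have "card {A, B, C} = 3"
    using \<open>A \<noteq> B\<close> \<open>A \<noteq> C\<close> \<open>B \<noteq> C\<close> by simp
  ultimately show ?thesis
    by blast
qed

theorem corollary4p9:
  fixes n r :: nat
  assumes "0 < n" and "0 < r"
    and "14 / 5 * real r - 1 \<le> real n"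
    and "n \<le> 3 * r - 2"
  shows "rho2 (kneser_verts n r) (kneser_adj n r) = 3"
proof -
  have "real (14 * r) \<le> real (5 * n + 5)"
    using assms(3) by simp
  then have n_lower: "14 * r \<le> 5 * n + 5"
    by linarith
  then have "2 * r \<le> n" "n + 2 \<le> 3 * r"
    using assms(2,4) by auto
  then obtain P where "two_packing (kneser_verts n r) (kneser_adj n r) P" "card P = 3"
    using kneser_two_packing_card_3_exists by blast
  then show ?thesis
    using n_lower by (intro rho2_eqI kneser_verts_finite kneser_two_packing_card_le_3)
qed

end
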